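(* Assume (A1)–(A3). If $m_2<0$, then for every $k\ge0$ there exist $C>0$, $\theta>0$ and $\tilde\theta>0$ such that for all $i\ge k_0$ and $j,\ell\in\mathbb Z$, \[\mathbb P_{(i,j)}\bigl(Y_1(T_1^k)=\ell\bigr)\le C\exp(-\theta(\ell-j)-\tilde\theta i),\] where $T_1^k=\inf\{n>0: X_1(n)\le\max(k_0-1,k)\}$.
   Context: Let $\mathbb N=\{0,1,2,\dots\}$ and fix an integer $k_0\ge1$. Let $\mu$, $\mu'_j$ ($0\le j<k_0$), $\mu''_i$ ($0\le i<k_0$), $\mu_{ij}$ ($0\le i,j<k_0$) be probability measures on $\mathbb Z^2$. The random walk $Z=(X(n),Y(n))$ on $\mathbb N^2$ has transition probabilities $p((i,j)\to(i',j'))$ equal to $\mu(i'-i,j'-j)$ if $i,j\ge k_0$; $\mu'_j(i'-i,j'-j)$ if $i\ge k_0$, $0\le j<k_0$; $\mu''_i(i'-i,j'-j)$ if $0\le i<k_0$, $j\ge k_0$; $\mu_{ij}(i'-i,j'-j)$ if $0\le i,j<k_0$. Assumptions: (A1) $\mu(a,b)=0$ if $a<-k_0$ or $b<-k_0$; $\mu'_j(a,b)=0$ if $a<-k_0$ or $b<-j$; $\mu''_i(a,b)=0$ if $b<-k_0$ or $a<-i$; $\mu_{ij}(a,b)=0$ if $a<-i$ or $b<-j$. (A2) There are $\delta,\gamma,C>0$ with $\sup_{(i,j)\in\mathbb N^2}\mathbb E_{(i,j)}[\exp(\delta(X(1)-i)+\gamma(Y(1)-j))]\le C$. (A3) $Z_0,Z_1,Z_2,Z$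 are irreducible on their state spaces. $Z_0$: random walk on $\mathbb Z^2$ with increment law $\mu$; $m_2=\sum b\mu(a,b)$. $Z_1=(X_1,Y_1)$: Markov chain on $\mathbb N\times\mathbb Z$ with transitions $\mu(i'-i,j'-j)$ from $(i,j)$ if $i\ge k_0$ and $\mu''_i(i'-i,j'-j)$ if $0\le i<k_0$; $\mathbb P_{(i,j)}$ is its law from $(i,j)$. $Z_2$: Markov chain on $\mathbb Z\times\mathbb N$ with transitions $\mu$ if $j\ge k_0$ and $\mu'_j$ if $0\le j<k_0$. *)

theory Defs
  imports "HOL-Probability.Probability"
begin

type_synonym state = "int \<times> int"

definition shift :: "state \<Rightarrow> state pmf \<Rightarrow> state pmf" where
  "shift z m = map_pmf (\<lambda>d. (fst z + fst d, snd z + snd d)) m"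

definition K0 :: "state pmf \<Rightarrow> state \<Rightarrow> state pmf" where
  "K0 \<mu> z = shift z \<mu>"

definition K1 :: "nat \<Rightarrow> state pmf \<Rightarrow> (nat \<Rightarrow> state pmf) \<Rightarrow> state \<Rightarrow> state pmf" where
  "K1 k0 \<mu> \<mu>2 z = shift z (if fst z \<ge> int k0 then \<mu> else \<mu>2 (nat (fst z)))"

definition K2 :: "nat \<Rightarrow> state pmf \<Rightarrow> (nat \<Rightarrow> state pmf) \<Rightarrow> state \<Rightarrow> state pmf" where
  "K2 k0 \<mu> \<mu>1 z = shift z (if snd z \<ge> int k0 then \<mu> else \<mu>1 (nat (snd z)))"

text \<open>Kernel of Z on N^2. Arguments: \<mu>, \<mu>'_j, \<mu>''_i, \<mu>_{ij}.\<close>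
definition KZ :: "nat \<Rightarrow> state pmf \<Rightarrow> (nat \<Rightarrow> state pmf) \<Rightarrow> (nat \<Rightarrow> state pmf)
                  \<Rightarrow> (nat \<Rightarrow> nat \<Rightarrow> state pmf) \<Rightarrow> state \<Rightarrow> state pmf" where
  "KZ k0 \<mu> \<mu>1 \<mu>2 \<mu>12 z = shift z
     (if fst z \<ge> int k0 \<and> snd z \<ge> int k0 then \<mu>
      else if fst z \<ge> int k0 then \<mu>1 (nat (snd z))
      else if snd z \<ge> int k0 then \<mu>2 (nat (fst z))
      else \<mu>12 (nat (fst z)) (nat (snd z)))"

definition irreducible_on :: "state set \<Rightarrow> (state \<Rightarrow> state pmf) \<Rightarrow> bool" where
  "irreducible_on S K \<longleftrightarrow>
     (\<forall>x\<in>S. \<forall>y\<in>S. (\<lambda>u v. pmf (K u) v > 0)\<^sup>*\<^sup>* x y)"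

text \<open>hit K L n z w = P_z(T = n+1 and Z(T) = w), where T = inf{n>0 : first coordinate \<le> L}.\<close>
fun hit :: "(state \<Rightarrow> state pmf) \<Rightarrow> int \<Rightarrow> nat \<Rightarrow> state \<Rightarrow> state \<Rightarrow> real" where
  "hit K L 0 z w = (if fst w \<le> L then pmf (K z) w else 0)"
| "hit K L (Suc n) z w =
     infsum (\<lambda>v. pmf (K z) v * hit K L n v w) {v. fst v > L}"

text \<open>P_z(Y(T) = l) with T as above (the event implies T < \<infinity>).\<close>
definition hitY :: "(state \<Rightarrow> state pmf) \<Rightarrow> int \<Rightarrow> state \<Rightarrow> int \<Rightarrow> real" where
  "hitY K L z l = infsum (\<lambda>n. infsum (\<lambda>i'. hit K L n z (i', l)) UNIV) UNIV"

end

theory Submission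
  imports Defs
begin

(* In the region x >= k0 the chain Z1 moves like the random walk with increment law mu.
   Because mu has exponential moments (A2 at (k0, k0) together with the lower bound A1 on
   its support), one can tilt the direction slightly: for small c > 0 the functional
   Y - c X still has negative mean, and Cramer's second-order argument yields s > 0 with
   E exp (s (Y - c X)) <= 1.  Then f (x, y) = exp (s (y - c x)) is superharmonic for Z1 on
   x >= k0, and optional stopping at T = T_1^k gives
   f (i, j) >= E [f (Z1 T); Y1 T = l] >= exp (s (l - c L)) P (Y1 T = l), L = max (k0 - 1) k,
   which is the claim with theta = s and theta' = s c. *)

lemma has_sum_pmf_expectation:
  fixes p :: "'a pmf" and f :: "'a \<Rightarrow> real"
  assumes "integrable (measure_pmf p) f"
  shows "((\<lambda>x. pmf p x * f x) has_sum measure_pmf.expectation p f) UNIV"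
proof -
  have "integrable (count_space UNIV) (\<lambda>x. pmf p x *\<^sub>R f x)"
    using assms by (subst (asm) measure_pmf_eq_density, subst (asm) integrable_density) auto
  then have "Infinite_Set_Sum.abs_summable_on (\<lambda>x. pmf p x * f x) UNIV"
    by (simp add: abs_summable_on_def)
  then have "(\<lambda>x. pmf p x * f x) summable_on UNIV"
    by (simp add: abs_summable_equivalent[symmetric] abs_summable_summable)
  moreover have "infsum (\<lambda>x. pmf p x * f x) UNIV = measure_pmf.expectation p f"
    using \<open>Infinite_Set_Sum.abs_summable_on _ _\<close>
    by (simp add: pmf_expectation_eq_infsetsum infsetsum_infsum)
  ultimately show ?thesis by (simp add: has_sum_iff)
qed

lemma has_sum_sum:
  fixes g :: "'i \<Rightarrow> 'a \<Rightarrow> 'b::topological_comm_monoid_add"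
  assumes "finite I" "\<And>i. i \<in> I \<Longrightarrow> (g i has_sum s i) A"
  shows "((\<lambda>x. \<Sum>i\<in>I. g i x) has_sum (\<Sum>i\<in>I. s i)) A"
  using assms by (induction I rule: finite_induct) (auto intro: has_sum_add)

lemma nonneg_summable_on_bounded:
  fixes g :: "'a \<Rightarrow> real"
  assumes "\<And>x. x \<in> A \<Longrightarrow> 0 \<le> g x" "\<And>F. finite F \<Longrightarrow> F \<subseteq> A \<Longrightarrow> sum g F \<le> B"
  shows "g summable_on A"
  using assms by (intro nonneg_bdd_above_summable_on) (auto simp: bdd_above_def)

lemma sum_add_infsum_le_has_sum:
  fixes g :: "'a \<Rightarrow> real"
  assumes "(g has_sum s) UNIV" "\<And>x. 0 \<le> g x" "finite E" "E \<inter> R = {}"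
  shows "sum g E + infsum g R \<le> s"
proof -
  have summable: "g summable_on A" for A
    using assms(1) has_sum_imp_summable summable_on_subset_banach by blast
  have "sum g E + infsum g R = infsum g (E \<union> R)"
    using assms(3,4) by (simp add: infsum_Un_disjoint summable)
  also have "\<dots> \<le> infsum g UNIV" by (intro infsum_mono2 summable) (auto simp: assms(2))
  also have "\<dots> = s" using assms(1) by (simp add: infsumI)
  finally show ?thesis .
qed

lemma infsum_infsum_le_of_partial_sums_le:
  fixes g :: "nat \<Rightarrow> 'a \<Rightarrow> real"
  assumes nonneg: "\<And>n x. 0 \<le> g n x"
    and bounded: "\<And>N F. finite F \<Longrightarrow> (\<Sum>n<N. \<Sum>x\<in>F. g n x) \<le> B"
  shows "(\<Sum>\<^sub>\<infinity>n. \<Sum>\<^sub>\<infinity>x. g n x) \<le> B"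
proof -
  have summable: "g n summable_on UNIV" for n
  proof (rule nonneg_summable_on_bounded)
    fix F :: "'a set" assume "finite F"
    have "sum (g n) F \<le> (\<Sum>m<Suc n. \<Sum>x\<in>F. g m x)"
      by (rule member_le_sum[where f = "\<lambda>m. \<Sum>x\<in>F. g m x"]) (auto intro: sum_nonneg nonneg)
    also have "\<dots> \<le> B" using bounded \<open>finite F\<close> .
    finally show "sum (g n) F \<le> B" .
  qed (rule nonneg)
  have initial_segment: "(\<Sum>n<N. \<Sum>\<^sub>\<infinity>x. g n x) \<le> B" for N
  proof (rule has_sum_le_finite_sums)
    show "((\<lambda>x. \<Sum>n<N. g n x) has_sum (\<Sum>n<N. \<Sum>\<^sub>\<infinity>x. g n x)) UNIV"
      using summable by (intro has_sum_sum) auto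
    show "(\<Sum>x\<in>F. \<Sum>n<N. g n x) \<le> B" if "finite F" for F
      using bounded[OF that] by (simp add: sum.swap[of _ F])
  qed
  have finite_sums: "(\<Sum>n\<in>S. \<Sum>\<^sub>\<infinity>x. g n x) \<le> B" if "finite S" for S
  proof -
    obtain N where "S \<subseteq> {..<N}" using finite_nat_bounded[OF \<open>finite S\<close>] by blast
    then have "(\<Sum>n\<in>S. \<Sum>\<^sub>\<infinity>x. g n x) \<le> (\<Sum>n<N. \<Sum>\<^sub>\<infinity>x. g n x)"
      by (intro sum_mono2) (auto intro: infsum_nonneg nonneg)
    also have "\<dots> \<le> B" by (rule initial_segment)
    finally show ?thesis .
  qed
  show ?thesis
    by (intro infsum_le_finite_sums nonneg_summable_on_bounded[where B = B] finite_sums)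
       (auto intro: infsum_nonneg nonneg)
qed

lemma pmf_mult_summable_on:
  assumes "\<And>x. 0 \<le> h x" "\<And>x. h x \<le> 1"
  shows "(\<lambda>x. pmf p x * h x) summable_on A" "(\<Sum>\<^sub>\<infinity>x\<in>A. pmf p x * h x) \<le> 1"
proof -
  have "(\<Sum>x\<in>F. pmf p x * h x) \<le> 1" if "finite F" for F
  proof -
    have "(\<Sum>x\<in>F. pmf p x * h x) \<le> sum (pmf p) F"
      using assms by (intro sum_mono mult_left_le) auto
    also have "\<dots> = measure_pmf.prob p F" using that by (simp add: measure_measure_pmf_finite)
    finally show ?thesis by (simp add: order_trans[OF _ measure_pmf.prob_le_1])
  qed
  then show summable: "(\<lambda>x. pmf p x * h x) summable_on A"
    using assms by (intro nonneg_summable_on_bounded) auto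
  show "(\<Sum>\<^sub>\<infinity>x\<in>A. pmf p x * h x) \<le> 1"
    using summable \<open>\<And>F. finite F \<Longrightarrow> _\<close> by (rule infsum_le_finite_sums)
qed

lemma hit_nonneg_le_one: "0 \<le> hit K L n z w \<and> hit K L n z w \<le> 1"
proof (induction n arbitrary: z)
  case 0
  then show ?case by (simp add: pmf_le_1)
next
  case (Suc n)
  then show ?case
    using pmf_mult_summable_on(2)[of "\<lambda>v. hit K L n v w"]
    by (auto intro!: infsum_nonneg)
qed

lemma hit_nonneg: "0 \<le> hit K L n z w"
  using hit_nonneg_le_one by blast

lemma has_sum_hit_Suc: "((\<lambda>v. pmf (K z) v * hit K L n v w) has_sum hit K L (Suc n) z w) {v. L < fst v}"
  unfolding hit.simps by (intro has_sum_infsum pmf_mult_summable_on(1)) (use hit_nonneg_le_one in auto)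

lemma hit_eq_0: "L < fst w \<Longrightarrow> hit K L n z w = 0"
  by (induction n arbitrary: z) auto

lemma hit_weighted_sum_le_superharmonic:
  fixes K :: "state \<Rightarrow> state pmf" and f :: "state \<Rightarrow> real"
  assumes f_nonneg: "\<And>v. 0 \<le> f v"
    and integrable: "\<And>v. v \<in> D \<Longrightarrow> integrable (measure_pmf (K v)) f"
    and superharmonic: "\<And>v. v \<in> D \<Longrightarrow> measure_pmf.expectation (K v) f \<le> f v"
    and interior: "{v. L < fst v} \<subseteq> D"
    and "z \<in> D" "finite F"
  shows "(\<Sum>n<N. \<Sum>w\<in>F. hit K L n z w * f w) \<le> f z"
  using \<open>z \<in> D\<close>
proof (induction N arbitrary: z)
  case 0
  then show ?case using f_nonneg by simp
next
  case (Suc N)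
  define P where "P = pmf (K z)"
  define R where "R = {v :: state. L < fst v}"
  define G where "G v = (\<Sum>n<N. \<Sum>w\<in>F. hit K L n v w * f w)" for v
  define E where "E = {w \<in> F. fst w \<le> L}"
  \<comment> \<open>First-step decomposition: a path either exits at once (into E) or moves to some
    v in R, where the induction hypothesis bounds the rest by f v.\<close>
  have Pf: "((\<lambda>v. P v * f v) has_sum measure_pmf.expectation (K z) f) UNIV"
    unfolding P_def using integrable[OF Suc.prems] by (rule has_sum_pmf_expectation)
  then have Pf_summable: "(\<lambda>v. P v * f v) summable_on A" for A
    using has_sum_imp_summable summable_on_subset_banach by blast
  have exit_now: "(\<Sum>w\<in>F. hit K L 0 z w * f w) = (\<Sum>v\<in>E. P v * f v)"
    unfolding E_def P_def using \<open>finite F\<close> by (simp add: sum.inter_filter) (rule sum.cong, auto)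
  have "((\<lambda>v. P v * hit K L n v w * f w) has_sum hit K L (Suc n) z w * f w) R" for n w
    unfolding P_def R_def by (intro has_sum_cmult_left has_sum_hit_Suc)
  then have "((\<lambda>v. \<Sum>n<N. \<Sum>w\<in>F. P v * hit K L n v w * f w)
              has_sum (\<Sum>n<N. \<Sum>w\<in>F. hit K L (Suc n) z w * f w)) R"
    using \<open>finite F\<close> by (intro has_sum_sum) auto
  then have exit_later: "((\<lambda>v. P v * G v) has_sum (\<Sum>n<N. \<Sum>w\<in>F. hit K L (Suc n) z w * f w)) R"
    by (simp add: G_def sum_distrib_left mult.assoc)
  have "(\<Sum>n<N. \<Sum>w\<in>F. hit K L (Suc n) z w * f w) \<le> (\<Sum>\<^sub>\<infinity>v\<in>R. P v * f v)"
  proof (rule has_sum_mono[OF exit_later has_sum_infsum[OF Pf_summable]])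
    fix v assume "v \<in> R"
    with interior have "v \<in> D" by (auto simp: R_def)
    then have "G v \<le> f v" unfolding G_def by (rule Suc.IH)
    then show "P v * G v \<le> P v * f v" by (simp add: P_def mult_left_mono)
  qed
  moreover have "(\<Sum>v\<in>E. P v * f v) + (\<Sum>\<^sub>\<infinity>v\<in>R. P v * f v) \<le> measure_pmf.expectation (K z) f"
    using \<open>finite F\<close> by (intro sum_add_infsum_le_has_sum[OF Pf]) (auto simp: P_def E_def R_def f_nonneg)
  moreover have "measure_pmf.expectation (K z) f \<le> f z" using Suc.prems by (rule superharmonic)
  ultimately show ?case
    using exit_now by (simp add: sum.lessThan_Suc_shift del: sum.lessThan_Suc)
qed

lemma hitY_le_superharmonic:
  fixes K :: "state \<Rightarrow> state pmf" and f :: "state \<Rightarrow> real"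
  assumes "\<And>v. 0 \<le> f v"
    and "\<And>v. v \<in> D \<Longrightarrow> integrable (measure_pmf (K v)) f"
    and "\<And>v. v \<in> D \<Longrightarrow> measure_pmf.expectation (K v) f \<le> f v"
    and "{v. L < fst v} \<subseteq> D"
    and "z \<in> D"
    and "c > 0" and exit_bound: "\<And>x. x \<le> L \<Longrightarrow> c \<le> f (x, l)"
  shows "hitY K L z l \<le> f z / c"
proof -
  have "c * (\<Sum>n<N. \<Sum>x\<in>F. hit K L n z (x, l)) \<le> f z" if "finite F" for N F
  proof -
    have "c * (\<Sum>n<N. \<Sum>x\<in>F. hit K L n z (x, l)) = (\<Sum>n<N. \<Sum>x\<in>F. hit K L n z (x, l) * c)"
      by (simp add: sum_distrib_left mult.commute)
    also have "\<dots> \<le> (\<Sum>n<N. \<Sum>x\<in>F. hit K L n z (x, l) * f (x, l))"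
    proof (intro sum_mono)
      fix n x
      show "hit K L n z (x, l) * c \<le> hit K L n z (x, l) * f (x, l)"
        by (cases "x \<le> L") (auto intro: mult_left_mono exit_bound hit_nonneg simp: hit_eq_0)
    qed
    also have "\<dots> = (\<Sum>n<N. \<Sum>w\<in>(\<lambda>x. (x, l)) ` F. hit K L n z w * f w)"
      by (simp add: sum.reindex inj_on_def)
    also have "\<dots> \<le> f z"
      using assms that by (intro hit_weighted_sum_le_superharmonic) auto
    finally show ?thesis .
  qed
  then show ?thesis
    unfolding hitY_def using \<open>c > 0\<close>
    by (intro infsum_infsum_le_of_partial_sums_le) (auto simp: hit_nonneg field_simps)
qed

lemma exp_le_Taylor_2: "exp (x::real) \<le> 1 + x + x\<^sup>2 * exp \<bar>x\<bar>"
proof -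
  obtain t where "\<bar>t\<bar> \<le> \<bar>x\<bar>" and exp_x: "exp x = 1 + x + x\<^sup>2 * exp t / 2"
    using Maclaurin_exp_le[of x 2] by (auto simp: numeral_2_eq_2 mult.commute)
  then have "x\<^sup>2 * exp t \<le> x\<^sup>2 * exp \<bar>x\<bar>" by (intro mult_left_mono) auto
  moreover have "0 \<le> x\<^sup>2 * exp \<bar>x\<bar>" by simp
  ultimately show ?thesis using exp_x by linarith
qed

lemma power2_le_4_exp: "0 \<le> (y::real) \<Longrightarrow> y\<^sup>2 \<le> 4 * exp y"
proof -
  assume "0 \<le> y"
  have "y/2 \<le> exp (y/2)" using exp_ge_add_one_self[of "y/2"] by linarith
  then have "(y/2)\<^sup>2 \<le> (exp (y/2))\<^sup>2" using \<open>0 \<le> y\<close> by (intro power_mono) auto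
  also have "(exp (y/2))\<^sup>2 = exp y" by (simp add: power2_eq_square flip: exp_add)
  finally show ?thesis by (simp add: power2_eq_square)
qed

lemma exp_mult_le_quadratic:
  fixes s t z :: real
  assumes "0 < s" "s \<le> t / 2"
  shows "exp (s * z) \<le> 1 + s * z + s\<^sup>2 * (16 / t\<^sup>2) * exp (t * \<bar>z\<bar>)"
proof -
  define y where "y = t * \<bar>z\<bar> / 2"
  have "t > 0" "0 \<le> y" using assms by (auto simp: y_def)
  have "z\<^sup>2 = 4 * y\<^sup>2 / t\<^sup>2" using \<open>t > 0\<close> by (simp add: y_def power2_eq_square field_simps)
  also have "\<dots> \<le> 16 / t\<^sup>2 * exp y"
    using power2_le_4_exp[OF \<open>0 \<le> y\<close>] by (simp add: divide_right_mono)
  finally have "z\<^sup>2 \<le> 16 / t\<^sup>2 * exp y" .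
  moreover have "s * \<bar>z\<bar> \<le> t / 2 * \<bar>z\<bar>" using assms by (intro mult_right_mono) auto
  then have "exp \<bar>s * z\<bar> \<le> exp y" using assms by (simp add: y_def abs_mult)
  ultimately have "z\<^sup>2 * exp \<bar>s * z\<bar> \<le> 16 / t\<^sup>2 * exp y * exp y"
    by (intro mult_mono) auto
  also have "\<dots> = 16 / t\<^sup>2 * exp (t * \<bar>z\<bar>)" by (simp add: y_def flip: exp_add)
  finally have "s\<^sup>2 * (z\<^sup>2 * exp \<bar>s * z\<bar>) \<le> s\<^sup>2 * (16 / t\<^sup>2 * exp (t * \<bar>z\<bar>))"
    by (rule mult_left_mono) simp
  then have "(s * z)\<^sup>2 * exp \<bar>s * z\<bar> \<le> s\<^sup>2 * (16 / t\<^sup>2) * exp (t * \<bar>z\<bar>)"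
    by (simp only: power_mult_distrib mult.assoc)
  then show ?thesis using exp_le_Taylor_2[of "s * z"] by linarith
qed

lemma (in prob_space) integrable_dominated_by_exp_moment:
  fixes g S :: "'a \<Rightarrow> real"
  assumes "0 < t" "integrable M (\<lambda>x. exp (t * S x))" "g \<in> borel_measurable M"
    and "\<And>x. \<bar>g x\<bar> \<le> S x"
  shows "integrable M g"
proof (rule Bochner_Integration.integrable_bound[OF _ assms(3)])
  show "integrable M (\<lambda>x. exp (t * S x) / t)" using assms(2) by simp
  have "t * \<bar>g x\<bar> \<le> exp (t * S x)" for x
    using assms(4)[of x] exp_ge_add_one_self[of "t * S x"] \<open>0 < t\<close> mult_left_mono[of "\<bar>g x\<bar>" "S x" t]
    by linarith
  then show "AE x in M. norm (g x) \<le> norm (exp (t * S x) / t)"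
    using \<open>0 < t\<close> by (intro AE_I2) (simp add: pos_le_divide_eq mult.commute)
qed

lemma (in prob_space) exists_exp_moment_le_one:
  fixes Z :: "'a \<Rightarrow> real"
  assumes "t > 0" and Z_measurable: "Z \<in> borel_measurable M"
    and exp_moment: "integrable M (\<lambda>x. exp (t * \<bar>Z x\<bar>))"
    and negative_mean: "expectation Z < 0"
  shows "\<exists>s>0. integrable M (\<lambda>x. exp (s * Z x)) \<and> expectation (\<lambda>x. exp (s * Z x)) \<le> 1"
proof -
  define W where "W x = exp (t * \<bar>Z x\<bar>)" for x
  define K where "K = 16 / t\<^sup>2"
  \<comment> \<open>s \<le> t / 2 allows the quadratic bound; s (K E W + 1) \<le> - E Z makes its
    second-order term at most the first-order gain - s E Z.\<close>
  define s where "s = min (t / 2) (- expectation Z / (K * expectation W + 1))"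
  have "0 \<le> expectation W" unfolding W_def by (rule integral_nonneg_AE) auto
  moreover have "0 \<le> K" by (simp add: K_def)
  ultimately have denominator_pos: "K * expectation W + 1 > 0" by (simp add: add_nonneg_pos)
  have "s > 0" using \<open>t > 0\<close> negative_mean denominator_pos by (simp add: s_def divide_neg_pos)
  have "s \<le> t / 2" unfolding s_def by (rule min.cobounded1)
  have "s \<le> - expectation Z / (K * expectation W + 1)" unfolding s_def by (rule min.cobounded2)
  then have "s * (K * expectation W + 1) \<le> - expectation Z"
    using denominator_pos by (simp add: field_simps)
  then have "s * (K * expectation W) + s \<le> - expectation Z" by (simp add: distrib_left)
  then have "s * (s * (K * expectation W)) \<le> s * (- expectation Z)"
    using \<open>s > 0\<close> by (intro mult_left_mono) auto
  then have drift: "s * expectation Z + s\<^sup>2 * K * expectation W \<le> 0"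
    by (simp add: power2_eq_square mult.assoc)
  have integrable_W: "integrable M W" using exp_moment by (simp add: W_def[abs_def])
  have integrable_Z: "integrable M Z"
    by (rule integrable_dominated_by_exp_moment[OF \<open>t > 0\<close> exp_moment Z_measurable]) simp
  have integrable_exp: "integrable M (\<lambda>x. exp (s * Z x))"
  proof (rule Bochner_Integration.integrable_bound[OF integrable_W])
    have "s * Z x \<le> t * \<bar>Z x\<bar>" for x
    proof -
      have "s * Z x \<le> s * \<bar>Z x\<bar>" using \<open>s > 0\<close> by (intro mult_left_mono) auto
      also have "\<dots> \<le> t * \<bar>Z x\<bar>" using \<open>s \<le> t / 2\<close> \<open>s > 0\<close> by (intro mult_right_mono) auto
      finally show ?thesis .
    qed
    then show "AE x in M. norm (exp (s * Z x)) \<le> norm (W x)" by (intro AE_I2) (simp add: W_def)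
  qed (use Z_measurable in measurable)
  have "exp (s * Z x) \<le> 1 + s * Z x + s\<^sup>2 * K * W x" for x
    unfolding K_def W_def using \<open>s > 0\<close> \<open>s \<le> t / 2\<close> by (rule exp_mult_le_quadratic)
  then have "expectation (\<lambda>x. exp (s * Z x)) \<le> expectation (\<lambda>x. 1 + s * Z x + s\<^sup>2 * K * W x)"
    using integrable_exp integrable_Z integrable_W by (intro integral_mono) auto
  also have "\<dots> = 1 + s * expectation Z + s\<^sup>2 * K * expectation W"
    using integrable_Z integrable_W by (simp add: prob_space)
  finally show ?thesis using drift \<open>s > 0\<close> integrable_exp by auto
qed

lemma abs_mult_le_of_bounded_below:
  fixes t \<delta> a k :: real
  assumes "0 < t" "t \<le> \<delta>" "0 \<le> k" "- k \<le> a"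
  shows "t * \<bar>a\<bar> \<le> \<delta> * a + (\<delta> + t) * k"
proof (cases "0 \<le> a")
  case True
  have "t * a \<le> \<delta> * a" using True assms by (intro mult_right_mono)
  moreover have "0 \<le> (\<delta> + t) * k" using assms by simp
  ultimately show ?thesis using True by simp
next
  case False
  have "t * - a \<le> t * k" using assms by (intro mult_left_mono) auto
  moreover have "0 \<le> \<delta> * (a + k)" using assms by simp
  ultimately show ?thesis using False by (simp add: algebra_simps)
qed

lemma exists_exp_abs_moment:
  fixes p :: "(int \<times> int) pmf" and \<delta> \<gamma> :: real and k :: nat
  assumes "0 < \<delta>" "0 < \<gamma>"
    and support: "\<And>a b. a < - int k \<or> b < - int k \<Longrightarrow> pmf p (a, b) = 0"
    and exp_moment: "(\<integral>\<^sup>+ d. ennreal (exp (\<delta> * real_of_int (fst d) + \<gamma> * real_of_int (snd d))) \<partial>p) < \<infinity>"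
  shows "\<exists>t>0. integrable p (\<lambda>d. exp (t * (\<bar>real_of_int (fst d)\<bar> + \<bar>real_of_int (snd d)\<bar>)))"
proof -
  define t where "t = min \<delta> \<gamma>"
  define C where "C = exp ((\<delta> + \<gamma> + 2 * t) * k)"
  have bound: "exp (t * (\<bar>real_of_int (fst d)\<bar> + \<bar>real_of_int (snd d)\<bar>))
      \<le> C * exp (\<delta> * real_of_int (fst d) + \<gamma> * real_of_int (snd d))"
    if "d \<in> set_pmf p" for d
  proof -
    have "pmf p (fst d, snd d) \<noteq> 0" using that by (simp add: set_pmf_iff)
    then have "- int k \<le> fst d" "- int k \<le> snd d"
      using support[of "fst d" "snd d"] by linarith+
    then have "t * \<bar>real_of_int (fst d)\<bar> \<le> \<delta> * real_of_int (fst d) + (\<delta> + t) * k"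
      "t * \<bar>real_of_int (snd d)\<bar> \<le> \<gamma> * real_of_int (snd d) + (\<gamma> + t) * k"
      using assms by (auto intro!: abs_mult_le_of_bounded_below simp: t_def)
    then have "t * (\<bar>real_of_int (fst d)\<bar> + \<bar>real_of_int (snd d)\<bar>)
        \<le> (\<delta> + \<gamma> + 2 * t) * k + (\<delta> * real_of_int (fst d) + \<gamma> * real_of_int (snd d))"
      by (simp add: algebra_simps)
    then show ?thesis by (simp add: C_def flip: exp_add)
  qed
  have "0 < C" by (simp add: C_def)
  have dominated: "AE d in p. norm (exp (t * (\<bar>real_of_int (fst d)\<bar> + \<bar>real_of_int (snd d)\<bar>)))
      \<le> norm (C * exp (\<delta> * real_of_int (fst d) + \<gamma> * real_of_int (snd d)))"
    using bound \<open>0 < C\<close> by (intro AE_pmfI) (simp add: abs_mult)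
  have dominating: "integrable p (\<lambda>d. C * exp (\<delta> * real_of_int (fst d) + \<gamma> * real_of_int (snd d)))"
    using exp_moment by (intro integrable_mult_right integrableI_bounded) auto
  have "integrable p (\<lambda>d. exp (t * (\<bar>real_of_int (fst d)\<bar> + \<bar>real_of_int (snd d)\<bar>)))"
    by (rule Bochner_Integration.integrable_bound[OF dominating _ dominated]) simp
  moreover have "0 < t" using assms by (simp add: t_def)
  ultimately show ?thesis by blast
qed

lemma (in prob_space) exists_tilt_negative_mean:
  fixes X Y :: "'a \<Rightarrow> real"
  assumes "integrable M X" "integrable M Y" "expectation Y < 0"
  shows "\<exists>c>0. expectation (\<lambda>x. Y x - c * X x) < 0"
proof -
  define c where "c = - expectation Y / (2 * (\<bar>expectation X\<bar> + 1))"
  have "0 < c" unfolding c_def using assms by (intro divide_pos_pos) auto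
  have "c * (\<bar>expectation X\<bar> + 1) = - expectation Y / 2"
    by (simp add: c_def field_simps add_nonneg_pos)
  moreover have "c * - expectation X \<le> c * \<bar>expectation X\<bar>"
    using \<open>0 < c\<close> by (intro mult_left_mono) auto
  moreover have "expectation (\<lambda>x. Y x - c * X x) = expectation Y - c * expectation X"
    using assms by simp
  ultimately have "expectation (\<lambda>x. Y x - c * X x) < 0"
    using assms \<open>0 < c\<close> by (simp add: algebra_simps)
  with \<open>0 < c\<close> show ?thesis by blast
qed

lemma exists_tilted_exp_moment_le_one:
  fixes p :: "(int \<times> int) pmf"
  assumes "0 < t"
    and exp_moment: "integrable p (\<lambda>d. exp (t * (\<bar>real_of_int (fst d)\<bar> + \<bar>real_of_int (snd d)\<bar>)))"
    and negative_drift: "measure_pmf.expectation p (\<lambda>d. real_of_int (snd d)) < 0"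
  shows "\<exists>s>0. \<exists>c>0.
    integrable p (\<lambda>d. exp (s * (real_of_int (snd d) - c * real_of_int (fst d)))) \<and>
    measure_pmf.expectation p (\<lambda>d. exp (s * (real_of_int (snd d) - c * real_of_int (fst d)))) \<le> 1"
proof -
  define S where "S d = \<bar>real_of_int (fst d)\<bar> + \<bar>real_of_int (snd d)\<bar>" for d :: "int \<times> int"
  have exp_moment_S: "integrable p (\<lambda>d. exp (t * S d))" using exp_moment by (simp add: S_def)
  have "integrable p (\<lambda>d. real_of_int (fst d))" "integrable p (\<lambda>d. real_of_int (snd d))"
    by (auto intro: measure_pmf.integrable_dominated_by_exp_moment[OF \<open>0 < t\<close> exp_moment_S] simp: S_def)
  then obtain c where "0 < c"
    and negative_mean: "measure_pmf.expectation p (\<lambda>d. real_of_int (snd d) - c * real_of_int (fst d)) < 0"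
    using measure_pmf.exists_tilt_negative_mean[OF _ _ negative_drift] by blast
  define Z where "Z d = real_of_int (snd d) - c * real_of_int (fst d)" for d :: "int \<times> int"
  have "\<bar>Z d\<bar> \<le> (1 + c) * S d" for d
  proof -
    have "\<bar>Z d\<bar> \<le> \<bar>real_of_int (snd d)\<bar> + c * \<bar>real_of_int (fst d)\<bar>"
      using \<open>0 < c\<close> abs_triangle_ineq4[of "real_of_int (snd d)" "c * real_of_int (fst d)"]
      by (simp add: Z_def abs_mult)
    moreover have "0 \<le> c * \<bar>real_of_int (snd d)\<bar>" using \<open>0 < c\<close> by simp
    ultimately show ?thesis unfolding S_def ring_distribs mult_1 by linarith
  qed
  then have "t / (1 + c) * \<bar>Z d\<bar> \<le> t / (1 + c) * ((1 + c) * S d)" for d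
    using \<open>0 < c\<close> \<open>0 < t\<close> by (intro mult_left_mono) auto
  then have "t / (1 + c) * \<bar>Z d\<bar> \<le> t * S d" for d
    using \<open>0 < c\<close> by simp
  then have exp_moment_Z: "integrable p (\<lambda>d. exp (t / (1 + c) * \<bar>Z d\<bar>))"
    by (intro Bochner_Integration.integrable_bound[OF exp_moment_S] AE_I2) auto
  have "measure_pmf.expectation p Z < 0"
    using negative_mean by (simp add: Z_def[abs_def])
  then obtain s where "0 < s" "integrable p (\<lambda>d. exp (s * Z d))"
    "measure_pmf.expectation p (\<lambda>d. exp (s * Z d)) \<le> 1"
    using measure_pmf.exists_exp_moment_le_one[OF _ _ exp_moment_Z] \<open>0 < t\<close> \<open>0 < c\<close> by auto
  then show ?thesis using \<open>0 < c\<close> unfolding Z_def by blast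
qed

lemma hitY_K1_le:
  fixes \<mu> :: "(int \<times> int) pmf" and s c :: real
  assumes "int k0 - 1 \<le> L" "0 < s" "0 < c"
    and integrable: "integrable \<mu> (\<lambda>d. exp (s * (real_of_int (snd d) - c * real_of_int (fst d))))"
    and mgf_le_one: "measure_pmf.expectation \<mu> (\<lambda>d. exp (s * (real_of_int (snd d) - c * real_of_int (fst d)))) \<le> 1"
    and "int k0 \<le> i"
  shows "hitY (K1 k0 \<mu> \<mu>2) L (i, j) l
    \<le> exp (s * c * real_of_int L) * exp (- s * real_of_int (l - j) - s * c * real_of_int i)"
proof -
  define f where "f v = exp (s * (real_of_int (snd v) - c * real_of_int (fst v)))" for v :: state
  define D where "D = {v :: state. int k0 \<le> fst v}"
  have f_nonneg: "0 \<le> f v" for v by (simp add: f_def)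
  have K1_superharmonic: "integrable (measure_pmf (K1 k0 \<mu> \<mu>2 v)) f \<and>
      measure_pmf.expectation (K1 k0 \<mu> \<mu>2 v) f \<le> f v" if "v \<in> D" for v
  proof -
    have K1_v: "K1 k0 \<mu> \<mu>2 v = map_pmf (\<lambda>d. (fst v + fst d, snd v + snd d)) \<mu>"
      using that by (simp add: D_def K1_def shift_def)
    have f_shift: "f (fst v + fst d, snd v + snd d)
        = f v * exp (s * (real_of_int (snd d) - c * real_of_int (fst d)))" for d
      by (simp add: f_def algebra_simps flip: exp_add)
    have "integrable (measure_pmf (K1 k0 \<mu> \<mu>2 v)) f"
      using integrable by (simp add: K1_v f_shift)
    moreover have "measure_pmf.expectation (K1 k0 \<mu> \<mu>2 v) f
        = f v * measure_pmf.expectation \<mu> (\<lambda>d. exp (s * (real_of_int (snd d) - c * real_of_int (fst d))))"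
      by (simp add: K1_v f_shift)
    moreover have "\<dots> \<le> f v"
      using mgf_le_one by (rule mult_left_le) (simp add: f_def)
    ultimately show ?thesis by simp
  qed
  have "c * real_of_int x \<le> c * real_of_int L" if "x \<le> L" for x
    using that \<open>0 < c\<close> by (intro mult_left_mono) auto
  then have exit_bound: "exp (s * (real_of_int l - c * real_of_int L)) \<le> f (x, l)" if "x \<le> L" for x
    using that \<open>0 < s\<close> by (simp add: f_def)
  have "hitY (K1 k0 \<mu> \<mu>2) L (i, j) l \<le> f (i, j) / exp (s * (real_of_int l - c * real_of_int L))"
    using K1_superharmonic \<open>int k0 \<le> i\<close> \<open>int k0 - 1 \<le> L\<close>
    by (intro hitY_le_superharmonic[where D = D and f = f] f_nonneg exit_bound) (auto simp: D_def)
  also have "\<dots> = exp (s * c * real_of_int L) * exp (- s * real_of_int (l - j) - s * c * real_of_int i)"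
    by (simp add: f_def algebra_simps flip: exp_add exp_diff)
  finally show ?thesis .
qed

theorem lemma5p6:
  fixes k0 :: nat
    and \<mu> :: "(int \<times> int) pmf"
    and \<mu>1 :: "nat \<Rightarrow> (int \<times> int) pmf"   \<comment> \<open>\<mu>'_j\<close>
    and \<mu>2 :: "nat \<Rightarrow> (int \<times> int) pmf"   \<comment> \<open>\<mu>''_i\<close>
    and \<mu>12 :: "nat \<Rightarrow> nat \<Rightarrow> (int \<times> int) pmf" \<comment> \<open>\<mu>_{ij}\<close>
  assumes k0: "k0 \<ge> 1"
    and A1_mu: "\<And>a b. a < - int k0 \<or> b < - int k0 \<Longrightarrow> pmf \<mu> (a, b) = 0"
    and A1_mu1: "\<And>j a b. j < k0 \<Longrightarrow> a < - int k0 \<or> b < - int j \<Longrightarrow> pmf (\<mu>1 j) (a, b) = 0"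
    and A1_mu2: "\<And>i a b. i < k0 \<Longrightarrow> b < - int k0 \<or> a < - int i \<Longrightarrow> pmf (\<mu>2 i) (a, b) = 0"
    and A1_mu12: "\<And>i j a b. i < k0 \<Longrightarrow> j < k0 \<Longrightarrow> a < - int i \<or> b < - int j
                    \<Longrightarrow> pmf (\<mu>12 i j) (a, b) = 0"
    and A2: "\<exists>\<delta> \<gamma> C. \<delta> > 0 \<and> \<gamma> > 0 \<and> C > 0 \<and>
              (\<forall>i j::nat. (\<integral>\<^sup>+ z. ennreal (exp (\<delta> * real_of_int (fst z - int i)
                                            + \<gamma> * real_of_int (snd z - int j)))
                           \<partial>measure_pmf (KZ k0 \<mu> \<mu>1 \<mu>2 \<mu>12 (int i, int j))) \<le> ennreal C)"
    and A3_Z0: "irreducible_on UNIV (K0 \<mu>)"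
    and A3_Z1: "irreducible_on {z. fst z \<ge> 0} (K1 k0 \<mu> \<mu>2)"
    and A3_Z2: "irreducible_on {z. snd z \<ge> 0} (K2 k0 \<mu> \<mu>1)"
    and A3_Z: "irreducible_on {z. fst z \<ge> 0 \<and> snd z \<ge> 0} (KZ k0 \<mu> \<mu>1 \<mu>2 \<mu>12)"
    and m2_neg: "measure_pmf.expectation \<mu> (\<lambda>d. real_of_int (snd d)) < 0"
  shows "\<forall>k::nat. \<exists>C>0. \<exists>\<theta>>0. \<exists>\<theta>'>0. \<forall>i j l. i \<ge> int k0 \<longrightarrow>
           hitY (K1 k0 \<mu> \<mu>2) (max (int k0 - 1) (int k)) (i, j) l
             \<le> C * exp (- \<theta> * real_of_int (l - j) - \<theta>' * real_of_int i)"
proof -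
  obtain \<delta> \<gamma> C where "0 < \<delta>" "0 < \<gamma>" and exp_moment_bound:
    "(\<integral>\<^sup>+ z. ennreal (exp (\<delta> * real_of_int (fst z - int k0) + \<gamma> * real_of_int (snd z - int k0)))
       \<partial>measure_pmf (KZ k0 \<mu> \<mu>1 \<mu>2 \<mu>12 (int k0, int k0))) \<le> ennreal C"
    using A2 by blast
  have "KZ k0 \<mu> \<mu>1 \<mu>2 \<mu>12 (int k0, int k0) = map_pmf (\<lambda>d. (int k0 + fst d, int k0 + snd d)) \<mu>"
    by (simp add: KZ_def shift_def)
  then have "(\<integral>\<^sup>+ d. ennreal (exp (\<delta> * real_of_int (fst d) + \<gamma> * real_of_int (snd d))) \<partial>\<mu>) < \<infinity>"
    using exp_moment_bound by (simp add: le_less_trans)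
  then obtain t where "0 < t"
    and "integrable \<mu> (\<lambda>d. exp (t * (\<bar>real_of_int (fst d)\<bar> + \<bar>real_of_int (snd d)\<bar>)))"
    using exists_exp_abs_moment[OF \<open>0 < \<delta>\<close> \<open>0 < \<gamma>\<close> A1_mu] by blast
  then obtain s c where "0 < s" "0 < c"
    and "integrable \<mu> (\<lambda>d. exp (s * (real_of_int (snd d) - c * real_of_int (fst d))))"
    and "measure_pmf.expectation \<mu> (\<lambda>d. exp (s * (real_of_int (snd d) - c * real_of_int (fst d)))) \<le> 1"
    using exists_tilted_exp_moment_le_one m2_neg by blast
  then have "hitY (K1 k0 \<mu> \<mu>2) (max (int k0 - 1) (int k)) (i, j) l
      \<le> exp (s * c * real_of_int (max (int k0 - 1) (int k)))
        * exp (- s * real_of_int (l - j) - s * c * real_of_int i)"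
    if "int k0 \<le> i" for k i j l
    using that by (intro hitY_K1_le) auto
  moreover have "0 < s * c" using \<open>0 < s\<close> \<open>0 < c\<close> by simp
  ultimately show ?thesis using \<open>0 < s\<close> exp_gt_zero by blast
qed

end
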